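(* Let $P$ be the open polyhedron consisting of $k\ge 3$ triangles $T_1,\dots,T_k$ arranged cyclically around a common vertex $v$, where consecutive triangles $T_i,T_{i+1}$ (indices mod $k$) share an edge incident to $v$, so that $v$ is an interior vertex and the boundary of $P$ is the closed cycle formed by the edges of the triangles opposite $v$. If $v$ has negative curvature (the sum of the angles of the $T_i$ at $v$ exceeds $2\pi$), then $P$ has no general unfolding.
   Context: A polyhedron is a connected set of closed planar polygons in $\mathbb{R}^3$ such that any intersection of two of them is a collection of common vertices and edges, and each edge is shared by at most two polygons; edges in only one polygon form the boundary. The curvature of a non-boundary vertex is $2\pi$ minus the sum of the face angles at it. A cutting of $P$ is a union $C$ of finitely many line segments on $P$ (possibly crossing faces), containing only finitely many boundary points of $P$, such that $P-C$ is connected and can be isometrically embedded in the plane without overlap; the result is a general unfolding. *)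

theory Defs
  imports "HOL-Analysis.Analysis"
begin

type_synonym pt3 = "real^3"
type_synonym pt2 = "real^2"

definition vangle :: "pt3 \<Rightarrow> pt3 \<Rightarrow> real" where
  "vangle u w = arccos ((u \<bullet> w) / (norm u * norm w))"

definition tri :: "pt3 \<Rightarrow> pt3 \<Rightarrow> pt3 \<Rightarrow> pt3 set" where
  "tri p q r = convex hull {p, q, r}"

definition is_cutting :: "pt3 set \<Rightarrow> pt3 set \<Rightarrow> pt3 set \<Rightarrow> bool" where
  "is_cutting P B C \<longleftrightarrow>
     (\<exists>S. finite S \<and> C = (\<Union>(p, q)\<in>S. closed_segment p q)
          \<and> (\<forall>(p, q)\<in>S. closed_segment p q \<subseteq> P))
     \<and> finite (C \<inter> B)
     \<and> connected (P - C)"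

text \<open>f is an isometric embedding of (\<Union>faces) - C into the plane without overlap:
  f is injective on (\<Union>faces) - C and, on each connected component of each
  face minus the cut, f preserves distances (i.e. it is locally isometric
  for the intrinsic metric of the surface).\<close>
definition flat_embedding :: "pt3 set set \<Rightarrow> pt3 set \<Rightarrow> (pt3 \<Rightarrow> pt2) \<Rightarrow> bool" where
  "flat_embedding faces C f \<longleftrightarrow>
     inj_on f (\<Union>faces - C)
     \<and> (\<forall>F\<in>faces. \<forall>x\<in>F - C. \<forall>y\<in>connected_component_set (F - C) x.
           dist (f x) (f y) = dist x y)"

definition has_general_unfolding :: "pt3 set set \<Rightarrow> pt3 set \<Rightarrow> bool" where
  "has_general_unfolding faces B \<longleftrightarrow>
     (\<exists>C f. is_cutting (\<Union>faces) B C \<and> flat_embedding faces C f)"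

end

(*
  Suppose the fan P around v had a cutting C with a flat embedding f. On each connected
  component of a face minus C, f is the restriction of an affine isometry of the plane of that
  face. Where two faces share an edge these isometries agree along the edge, so the point to
  which they send v is locally constant on the connected set P - C, hence the same point p for
  all of them.

  Take a circle of small radius r around v on P. It runs through the face T_i along an arc of
  angle alpha_i, and it meets the finitely many segments of C in finitely many points. Off
  these points, each arc is mapped isometrically onto an arc of the circle of radius r around p.
  Of M equally spaced points on that circle, an image arc of angle beta therefore contains at
  least beta M / (2 pi) - 1 points, so the images of all arcs contain at least
  (sum of the alpha_i) M / (2 pi) - N of them, with N independent of M. Since f is injective,
  this is at most M; letting M grow gives that the alpha_i sum to at most 2 pi.
*)

theory Submission
  imports Defs "HOL-Computational_Algebra.Polynomial"
begin

section \<open>Elementary Euclidean geometry\<close>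

lemma isometry_on_inner_diff:
  fixes f :: "'a::real_inner \<Rightarrow> 'b::real_inner"
  assumes iso: "\<forall>y\<in>S. \<forall>y'\<in>S. dist (f y) (f y') = dist y y'"
    and "x \<in> S" "y \<in> S" "c \<in> S"
  shows "(f x - f c) \<bullet> (f y - f c) = (x - c) \<bullet> (y - c)"
proof -
  have "norm (f x - f c) = norm (x - c)" "norm (f y - f c) = norm (y - c)"
    "norm (f x - f y) = norm (x - y)"
    using iso assms by (auto simp: dist_norm)
  then show ?thesis
    using dot_norm_neg[of "f x - f c" "f y - f c"] dot_norm_neg[of "x - c" "y - c"] by simp
qed

lemma isometry_on_affine_frame:
  fixes f :: "'a::real_inner \<Rightarrow> 'b::real_inner"
  assumes iso: "\<forall>y\<in>S. \<forall>y'\<in>S. dist (f y) (f y') = dist y y'"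
    and S: "u \<in> S" "u + D1 \<in> S" "u + D2 \<in> S" "y \<in> S"
    and y: "y = u + \<alpha> *\<^sub>R D1 + \<beta> *\<^sub>R D2"
  shows "f y = f u + \<alpha> *\<^sub>R (f (u + D1) - f u) + \<beta> *\<^sub>R (f (u + D2) - f u)"
proof -
  define F1 F2 G Y where "F1 = f (u + D1) - f u" and "F2 = f (u + D2) - f u"
    and "G = f y - f u" and "Y = y - u"
  note gram = isometry_on_inner_diff[OF iso _ _ S(1)]
  have "F1 \<bullet> F1 = D1 \<bullet> D1" "F2 \<bullet> F2 = D2 \<bullet> D2" "F1 \<bullet> F2 = D1 \<bullet> D2" "F2 \<bullet> F1 = D2 \<bullet> D1"
    "G \<bullet> G = Y \<bullet> Y" "G \<bullet> F1 = Y \<bullet> D1" "G \<bullet> F2 = Y \<bullet> D2" "F1 \<bullet> G = D1 \<bullet> Y" "F2 \<bullet> G = D2 \<bullet> Y"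
    using gram S by (simp_all add: F1_def F2_def G_def Y_def)
  then have "(G - \<alpha> *\<^sub>R F1 - \<beta> *\<^sub>R F2) \<bullet> (G - \<alpha> *\<^sub>R F1 - \<beta> *\<^sub>R F2)
      = (Y - \<alpha> *\<^sub>R D1 - \<beta> *\<^sub>R D2) \<bullet> (Y - \<alpha> *\<^sub>R D1 - \<beta> *\<^sub>R D2)"
    by (simp add: inner_diff_left inner_diff_right)
  also have "\<dots> = 0"
    using y by (simp add: Y_def)
  finally have "G - \<alpha> *\<^sub>R F1 - \<beta> *\<^sub>R F2 = 0"
    by simp
  then show ?thesis
    by (simp add: F1_def F2_def G_def algebra_simps)
qed

lemma eq_if_lines_agree_twice:
  fixes p q A B :: "'a::real_vector"
  assumes "p + s *\<^sub>R A = q + s *\<^sub>R B" "p + s' *\<^sub>R A = q + s' *\<^sub>R B" "s \<noteq> s'"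
  shows "p = q"
proof -
  have "(p + s *\<^sub>R A) - (p + s' *\<^sub>R A) = (q + s *\<^sub>R B) - (q + s' *\<^sub>R B)"
    using assms(1,2) by simp
  then have "(s - s') *\<^sub>R A = (s - s') *\<^sub>R B"
    by (simp add: scaleR_diff_left)
  then have "A = B"
    using assms(3) by simp
  then show ?thesis
    using assms(1) by simp
qed

lemma finite_closed_segment_Int_sphere:
  fixes p q c :: "'a::real_inner"
  shows "finite (closed_segment p q \<inter> sphere c r)"
proof (cases "p = q")
  case False
  define A B C where "A = (q - p) \<bullet> (q - p)" and "B = 2 * ((p - c) \<bullet> (q - p))"
    and "C = (p - c) \<bullet> (p - c) - r\<^sup>2"
  have "closed_segment p q \<inter> sphere c r \<subseteq> (\<lambda>u. p + u *\<^sub>R (q - p)) ` {u. poly [:C, B, A:] u = 0}"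
  proof
    fix y assume y: "y \<in> closed_segment p q \<inter> sphere c r"
    then obtain u where u: "y = p + u *\<^sub>R (q - p)"
      unfolding closed_segment_def by (auto simp: algebra_simps)
    have "norm (y - c) = r"
      using y by (simp add: dist_norm norm_minus_commute)
    then have "(y - c) \<bullet> (y - c) = r\<^sup>2"
      by (simp flip: power2_norm_eq_inner)
    then have "poly [:C, B, A:] u = 0"
      by (simp add: u A_def B_def C_def inner_add_left inner_add_right inner_commute
          power2_eq_square algebra_simps)
    then show "y \<in> (\<lambda>u. p + u *\<^sub>R (q - p)) ` {u. poly [:C, B, A:] u = 0}"
      using u by blast
  qed
  moreover have "[:C, B, A:] \<noteq> 0"
    using False by (simp add: A_def)
  ultimately show ?thesis
    by (metis finite_imageI finite_subset poly_roots_finite)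
qed simp

section \<open>Counting lattice points\<close>

lemma card_lattice_points_in_interval:
  fixes h lo hi :: real
  assumes "h > 0"
  shows "real (card {m::int. lo < m * h \<and> m * h < hi}) \<ge> (hi - lo) / h - 1"
proof -
  have "lo < m * h \<longleftrightarrow> \<lfloor>lo / h\<rfloor> < m" "m * h < hi \<longleftrightarrow> m < \<lceil>hi / h\<rceil>" for m :: int
    using assms by (simp_all add: floor_less_iff less_ceiling_iff pos_divide_less_eq pos_less_divide_eq)
  then have "{m::int. lo < m * h \<and> m * h < hi} = {\<lfloor>lo / h\<rfloor> + 1 ..< \<lceil>hi / h\<rceil>}"
    by auto
  moreover have "hi / h - lo / h - 1 \<le> real_of_int (\<lceil>hi / h\<rceil> - (\<lfloor>lo / h\<rfloor> + 1))"
    using le_of_int_ceiling[of "hi / h"] of_int_floor_le[of "lo / h"] by linarith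
  ultimately show ?thesis
    by (simp add: diff_divide_distrib)
qed

lemma card_reflected_lattice_in_interval:
  fixes h \<theta> \<sigma> c e :: real
  assumes h: "h > 0" and G: "finite G" and \<sigma>: "\<sigma> = 1 \<or> \<sigma> = -1"
    and lattice: "\<forall>t\<in>{c<..<e}. t \<in> G \<longleftrightarrow> (\<exists>m::int. \<theta> + \<sigma> * t = m * h)"
  shows "real (card (G \<inter> {c<..<e})) \<ge> (e - c) / h - 1"
proof -
  have "\<exists>lo hi. hi - lo = e - c \<and>
      (\<forall>m::int. lo < m * h \<and> m * h < hi \<longrightarrow> \<sigma> * (m * h - \<theta>) \<in> {c<..<e})"
    using \<sigma>
  proof
    assume "\<sigma> = 1"
    then show ?thesis by (intro exI[of _ "\<theta> + c"] exI[of _ "\<theta> + e"]) auto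
  next
    assume "\<sigma> = -1"
    then show ?thesis by (intro exI[of _ "\<theta> - e"] exI[of _ "\<theta> - c"]) auto
  qed
  then obtain lo hi where len: "hi - lo = e - c"
    and into: "\<And>m::int. lo < m * h \<Longrightarrow> m * h < hi \<Longrightarrow> \<sigma> * (m * h - \<theta>) \<in> {c<..<e}"
    by blast
  define L where "L = {m::int. lo < m * h \<and> m * h < hi}"
  have "(\<lambda>m. \<sigma> * (m * h - \<theta>)) ` L \<subseteq> G \<inter> {c<..<e}"
    using into lattice \<sigma> by (force simp: L_def)
  moreover have "inj_on (\<lambda>m. \<sigma> * (m * h - \<theta>)) L"
    using h \<sigma> by (auto simp: inj_on_def)
  ultimately have "card L \<le> card (G \<inter> {c<..<e})"
    using G by (metis card_image card_mono finite_Int)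
  then show ?thesis
    using card_lattice_points_in_interval[OF h, where lo=lo and hi=hi] len by (simp add: L_def)
qed

lemma card_piecewise_reflected_lattice:
  fixes h a b :: real
  assumes h: "h > 0" and G: "finite G" and D: "finite D"
    and lattice: "\<And>c e. a \<le> c \<Longrightarrow> c < e \<Longrightarrow> e \<le> b \<Longrightarrow> {c<..<e} \<inter> D = {} \<Longrightarrow>
        \<exists>\<theta> \<sigma>. (\<sigma> = 1 \<or> \<sigma> = -1) \<and> (\<forall>t\<in>{c<..<e}. t \<in> G \<longleftrightarrow> (\<exists>m::int. \<theta> + \<sigma> * t = m * h))"
  shows "real (card (G \<inter> {a<..<b})) \<ge> (b - a) / h - real (card (D \<inter> {a<..<b})) - 1"
  using lattice
proof (induction "card (D \<inter> {a<..<b})" arbitrary: a b rule: less_induct)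
  case less
  show ?case
  proof (cases "D \<inter> {a<..<b} = {}")
    case True
    show ?thesis
    proof (cases "a < b")
      case True
      with less.prems[of a b] \<open>D \<inter> {a<..<b} = {}\<close> show ?thesis
        by (auto simp: Int_commute intro: card_reflected_lattice_in_interval[OF h G])
    next
      case False
      then have "(b - a) / h \<le> 0"
        using h by (simp add: divide_nonpos_pos)
      then show ?thesis by simp
    qed
  next
    case False
    then obtain d where d: "d \<in> D" "a < d" "d < b" by auto
    have split: "D \<inter> {a<..<b} = insert d (D \<inter> {a<..<d} \<union> D \<inter> {d<..<b})"
      using d by auto
    have card_split: "card (D \<inter> {a<..<b}) = card (D \<inter> {a<..<d}) + card (D \<inter> {d<..<b}) + 1"
      unfolding split using D by (subst card_insert_disjoint) (auto intro: card_Un_disjoint)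
    have "(d - a) / h - real (card (D \<inter> {a<..<d})) - 1 \<le> real (card (G \<inter> {a<..<d}))"
      using card_split less.prems d by (intro less.hyps) auto
    moreover have "(b - d) / h - real (card (D \<inter> {d<..<b})) - 1 \<le> real (card (G \<inter> {d<..<b}))"
      using card_split less.prems d by (intro less.hyps) auto
    moreover have "card (G \<inter> {a<..<d}) + card (G \<inter> {d<..<b}) \<le> card (G \<inter> {a<..<b})"
      using G d by (subst card_Un_disjoint[symmetric]) (auto intro: card_mono)
    moreover have "(d - a) / h + (b - d) / h = (b - a) / h"
      by (simp add: diff_divide_distrib)
    ultimately show ?thesis
      using card_split by simp
  qed
qed

lemma le_one_if_multiples_bounded:
  fixes x c :: real
  assumes bound: "\<And>M::nat. M > 0 \<Longrightarrow> real M * x \<le> real M + c"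
  shows "x \<le> 1"
proof (rule ccontr)
  assume "\<not> x \<le> 1"
  define M where "M = nat \<lceil>c / (x - 1)\<rceil> + 1"
  have "c / (x - 1) < real M"
    unfolding M_def by linarith
  then have "c < real M * (x - 1)"
    using \<open>\<not> x \<le> 1\<close> by (simp add: pos_divide_less_eq)
  then show False
    using bound[of M] by (simp add: M_def algebra_simps)
qed

section \<open>Circles in the plane\<close>

text \<open>e1, e2 is the Gram-Schmidt frame of x, y, and the identity writes the point at angle t on
  the circle of radius r in the coordinates of x and y; here alpha is the angle between x and y.\<close>
lemma sector_frame:
  fixes x y :: "'a::real_inner"
  assumes x: "x \<noteq> 0" and y: "y \<noteq> 0" and sin: "sin \<alpha> \<noteq> 0"
    and cos: "cos \<alpha> = (x \<bullet> y) / (norm x * norm y)"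
  obtains e1 e2 where "e1 \<bullet> e1 = 1" "e2 \<bullet> e2 = 1" "e1 \<bullet> e2 = 0"
    "\<And>r t. (r * sin (\<alpha> - t) / (sin \<alpha> * norm x)) *\<^sub>R x + (r * sin t / (sin \<alpha> * norm y)) *\<^sub>R y
       = r *\<^sub>R (cos t *\<^sub>R e1 + sin t *\<^sub>R e2)"
proof -
  define u e1 where "u = y /\<^sub>R norm y" and "e1 = x /\<^sub>R norm x"
  define e2 where "e2 = (u - cos \<alpha> *\<^sub>R e1) /\<^sub>R sin \<alpha>"
  have e1u: "e1 \<bullet> u = cos \<alpha>"
    using cos x y by (simp add: e1_def u_def field_simps)
  have e11: "e1 \<bullet> e1 = 1" and uu: "u \<bullet> u = 1"
    using x y by (simp_all add: e1_def u_def dot_square_norm power2_eq_square)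
  have e12: "e1 \<bullet> e2 = 0"
    using e11 e1u by (simp add: e2_def inner_diff_right)
  have u_e: "u = cos \<alpha> *\<^sub>R e1 + sin \<alpha> *\<^sub>R e2"
    using sin by (simp add: e2_def)
  then have "sin \<alpha> *\<^sub>R e2 = u - cos \<alpha> *\<^sub>R e1"
    by simp
  then have "(sin \<alpha>)\<^sup>2 * (e2 \<bullet> e2) = (u - cos \<alpha> *\<^sub>R e1) \<bullet> (u - cos \<alpha> *\<^sub>R e1)"
    by (metis inner_scaleR_left inner_scaleR_right mult.assoc power2_eq_square)
  also have "\<dots> = u \<bullet> u - 2 * cos \<alpha> * (e1 \<bullet> u) + (cos \<alpha>)\<^sup>2 * (e1 \<bullet> e1)"
    by (simp add: inner_diff_left inner_diff_right inner_commute power2_eq_square algebra_simps)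
  also have "\<dots> = (sin \<alpha>)\<^sup>2"
    using uu e1u e11 sin_cos_squared_add[of \<alpha>] by (simp add: power2_eq_square)
  finally have e22: "e2 \<bullet> e2 = 1"
    using sin by simp
  have "(r * sin (\<alpha> - t) / (sin \<alpha> * norm x)) *\<^sub>R x + (r * sin t / (sin \<alpha> * norm y)) *\<^sub>R y
      = r *\<^sub>R (cos t *\<^sub>R e1 + sin t *\<^sub>R e2)" for r t
  proof -
    have "(r * sin (\<alpha> - t) / (sin \<alpha> * norm x)) *\<^sub>R x = (r * sin (\<alpha> - t) / sin \<alpha>) *\<^sub>R e1"
      using x by (simp add: e1_def divide_inverse ac_simps)
    moreover have "(r * sin t / (sin \<alpha> * norm y)) *\<^sub>R y = (r * sin t / sin \<alpha>) *\<^sub>R u"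
      using y by (simp add: u_def divide_inverse ac_simps)
    ultimately have "(r * sin (\<alpha> - t) / (sin \<alpha> * norm x)) *\<^sub>R x + (r * sin t / (sin \<alpha> * norm y)) *\<^sub>R y
        = (r * sin (\<alpha> - t) / sin \<alpha> + r * sin t * cos \<alpha> / sin \<alpha>) *\<^sub>R e1 + (r * sin t) *\<^sub>R e2"
      using sin by (simp add: u_e scaleR_add_right scaleR_add_left)
    also have "r * sin (\<alpha> - t) / sin \<alpha> + r * sin t * cos \<alpha> / sin \<alpha> = r * cos t"
      using sin by (simp add: sin_diff field_simps)
    finally show ?thesis
      by (simp add: scaleR_add_right)
  qed
  with e11 e22 e12 show thesis
    using that by blast
qed

lemma norm_cos_sin_orthonormal:
  fixes e1 e2 :: "'a::real_inner"
  assumes "e1 \<bullet> e1 = 1" "e2 \<bullet> e2 = 1" "e1 \<bullet> e2 = 0"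
  shows "norm (cos t *\<^sub>R e1 + sin t *\<^sub>R e2) = 1"
proof -
  have "(cos t *\<^sub>R e1 + sin t *\<^sub>R e2) \<bullet> (cos t *\<^sub>R e1 + sin t *\<^sub>R e2) = 1"
    using assms sin_cos_squared_add[of t] by (simp add: inner_add_left inner_add_right inner_commute power2_eq_square)
  then show ?thesis
    by (simp add: norm_eq_1)
qed

definition circle_point :: "real \<Rightarrow> pt2" where
  "circle_point \<theta> = vector [cos \<theta>, sin \<theta>]"

lemma circle_point_eq_iff: "circle_point x = circle_point y \<longleftrightarrow> (\<exists>j::int. x = y + 2 * pi * j)"
proof -
  have "circle_point x = circle_point y \<longleftrightarrow> sin x = sin y \<and> cos x = cos y"
    by (auto simp: circle_point_def vec_eq_iff forall_2 vector_2)
  then show ?thesis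
    by (simp add: sin_cos_eq_iff)
qed

lemma inner_pt2: "(x::pt2) \<bullet> y = x$1 * y$1 + x$2 * y$2"
  by (simp add: inner_vec_def sum_2)

lemma orthonormal_pair_circle_param:
  fixes E1 E2 :: pt2
  assumes "E1 \<bullet> E1 = 1" "E2 \<bullet> E2 = 1" "E1 \<bullet> E2 = 0"
  obtains \<sigma> \<theta> where "\<sigma> = 1 \<or> \<sigma> = -1" "\<And>t. cos t *\<^sub>R E1 + sin t *\<^sub>R E2 = circle_point (\<theta> + \<sigma> * t)"
proof -
  have "(E1$1)\<^sup>2 + (E1$2)\<^sup>2 = 1"
    using assms(1) by (simp add: inner_pt2 power2_eq_square)
  then obtain \<theta> where \<theta>: "E1$1 = cos \<theta>" "E1$2 = sin \<theta>"
    using sincos_total_2pi by metis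
  define \<sigma> where "\<sigma> = - sin \<theta> * E2$1 + cos \<theta> * E2$2"
  have orth: "cos \<theta> * E2$1 + sin \<theta> * E2$2 = 0"
    using assms(3) \<theta> by (simp add: inner_pt2)
  have norm2: "(E2$1)\<^sup>2 + (E2$2)\<^sup>2 = 1"
    using assms(2) by (simp add: inner_pt2 power2_eq_square)
  have pyth: "(sin \<theta>)\<^sup>2 + (cos \<theta>)\<^sup>2 = 1"
    by simp
  have E2: "E2$1 = - \<sigma> * sin \<theta>" "E2$2 = \<sigma> * cos \<theta>"
    using orth pyth unfolding \<sigma>_def by algebra+
  have "\<sigma>\<^sup>2 = 1"
    using norm2 pyth unfolding E2 by algebra
  then have \<sigma>: "\<sigma> = 1 \<or> \<sigma> = -1"
    by (simp add: power2_eq_1_iff)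
  have "cos t *\<^sub>R E1 + sin t *\<^sub>R E2 = circle_point (\<theta> + \<sigma> * t)" for t
    using \<sigma> \<theta> E2 by (auto simp: circle_point_def vec_eq_iff forall_2 vector_2 cos_add sin_add
        algebra_simps)
  with \<sigma> show ?thesis
    using that by blast
qed

lemma circle_point_root_of_unity_iff:
  fixes M :: nat
  assumes M: "M > 0"
  shows "(\<exists>n<M. circle_point y = circle_point (2 * pi * n / M)) \<longleftrightarrow> (\<exists>m::int. y = m * (2 * pi / M))"
proof
  assume "\<exists>n<M. circle_point y = circle_point (2 * pi * n / M)"
  then obtain n :: nat and j :: int where "y = 2 * pi * n / M + 2 * pi * j"
    by (auto simp: circle_point_eq_iff)
  then have "y = real_of_int (int n + j * int M) * (2 * pi / M)"
    using M by (simp add: field_simps)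
  then show "\<exists>m::int. y = m * (2 * pi / M)" ..
next
  assume "\<exists>m::int. y = m * (2 * pi / M)"
  then obtain m :: int where m: "y = m * (2 * pi / M)" ..
  define n where "n = nat (m mod M)"
  have "n < M" "m = int n + (m div M) * M"
    using M by (simp_all add: n_def nat_less_iff)
  then have "real_of_int m = real n + real_of_int (m div M) * real M"
    by (metis of_int_add of_int_mult of_int_of_nat_eq)
  then have "y = 2 * pi * n / M + 2 * pi * (m div M)"
    using M m by (simp add: field_simps)
  with \<open>n < M\<close> show "\<exists>n<M. circle_point y = circle_point (2 * pi * n / M)"
    by (auto simp: circle_point_eq_iff)
qed

definition circle_grid :: "pt2 \<Rightarrow> real \<Rightarrow> nat \<Rightarrow> pt2 set" where
  "circle_grid p r M = (\<lambda>n::nat. p + r *\<^sub>R circle_point (2 * pi * n / M)) ` {..<M}"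

lemma finite_circle_grid: "finite (circle_grid p r M)"
  by (simp add: circle_grid_def)

lemma card_circle_grid_le: "card (circle_grid p r M) \<le> M"
  unfolding circle_grid_def by (metis card_image_le card_lessThan finite_lessThan)

lemma mem_circle_grid_iff:
  assumes "r \<noteq> 0" "M > 0"
  shows "p + r *\<^sub>R circle_point y \<in> circle_grid p r M \<longleftrightarrow> (\<exists>m::int. y = m * (2 * pi / M))"
proof -
  have "p + r *\<^sub>R circle_point y \<in> circle_grid p r M \<longleftrightarrow> (\<exists>n<M. circle_point y = circle_point (2 * pi * n / M))"
    using assms(1) by (auto simp: circle_grid_def)
  then show ?thesis
    using circle_point_root_of_unity_iff[OF assms(2)] by simp
qed

section \<open>Fans of triangles\<close>

text \<open>Only the shape of the pairwise intersections of the faces matters, not their cyclic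
  order around v.\<close>
locale triangle_fan =
  fixes I :: "'i set" and v :: pt3 and a b :: "'i \<Rightarrow> pt3"
  assumes finite_index: "finite I" and index_nonempty: "I \<noteq> {}"
    and noncollinear: "\<And>i. i \<in> I \<Longrightarrow> \<not> collinear {v, a i, b i}"
    and faces_meet: "\<And>i j. i \<in> I \<Longrightarrow> j \<in> I \<Longrightarrow> i \<noteq> j \<Longrightarrow>
        tri v (a i) (b i) \<inter> tri v (a j) (b j) = {v} \<or>
        (\<exists>w \<in> {a i, b i} \<inter> {a j, b j}. tri v (a i) (b i) \<inter> tri v (a j) (b j) = closed_segment v w)"
begin

definition face :: "'i \<Rightarrow> pt3 set" where
  "face i = tri v (a i) (b i)"

definition face_point :: "'i \<Rightarrow> real \<Rightarrow> real \<Rightarrow> pt3" where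
  "face_point i s t = v + s *\<^sub>R (a i - v) + t *\<^sub>R (b i - v)"

lemma face_eq: "face i = {face_point i s t | s t. 0 \<le> s \<and> 0 \<le> t \<and> s + t \<le> 1}"
  by (simp add: face_def face_point_def tri_def convex_hull_3_alt)

lemma face_pointI: "0 \<le> s \<Longrightarrow> 0 \<le> t \<Longrightarrow> s + t \<le> 1 \<Longrightarrow> face_point i s t \<in> face i"
  unfolding face_eq by blast

lemma face_pointE:
  assumes "x \<in> face i"
  obtains s t where "0 \<le> s" "0 \<le> t" "s + t \<le> 1" "x = face_point i s t"
  using assms unfolding face_eq by blast

lemma vertex_in_face: "v \<in> face i"
  using face_pointI[of 0 0 i] by (simp add: face_point_def)

lemma closed_face: "closed (face i)"
  by (simp add: face_def tri_def compact_imp_closed finite_imp_compact_convex_hull)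

lemma convex_face: "convex (face i)"
  by (simp add: face_def tri_def)

lemma face_Int_face:
  "i \<in> I \<Longrightarrow> j \<in> I \<Longrightarrow> i \<noteq> j \<Longrightarrow> face i \<inter> face j = {v} \<or>
     (\<exists>w \<in> {a i, b i} \<inter> {a j, b j}. face i \<inter> face j = closed_segment v w)"
  unfolding face_def by (rule faces_meet)

lemma edge_vectors_independent:
  assumes "i \<in> I"
  shows "a i - v \<noteq> 0" "b i - v \<noteq> 0" "\<nexists>c. b i - v = c *\<^sub>R (a i - v)"
proof -
  have "{v, a i, b i} = {a i, v, b i}"
    by auto
  then have "\<not> collinear {0, a i - v, b i - v}"
    using noncollinear[OF assms] by (simp add: collinear_3)
  then show "a i - v \<noteq> 0" "b i - v \<noteq> 0" "\<nexists>c. b i - v = c *\<^sub>R (a i - v)"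
    unfolding collinear_lemma by blast+
qed

lemma face_point_eq_iff:
  assumes "i \<in> I"
  shows "face_point i s t = face_point i s' t' \<longleftrightarrow> s = s' \<and> t = t'"
proof
  assume "face_point i s t = face_point i s' t'"
  then have eq: "(t - t') *\<^sub>R (b i - v) = (s' - s) *\<^sub>R (a i - v)"
    by (simp add: face_point_def algebra_simps)
  have "t = t'"
  proof (rule ccontr)
    assume "t \<noteq> t'"
    then have "b i - v = inverse (t - t') *\<^sub>R ((t - t') *\<^sub>R (b i - v))"
      by simp
    also have "\<dots> = ((s' - s) / (t - t')) *\<^sub>R (a i - v)"
      unfolding eq by (simp add: divide_inverse)
    finally show False
      using edge_vectors_independent[OF assms] by blast
  qed
  then show "s = s' \<and> t = t'"
    using eq edge_vectors_independent[OF assms] by simp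
qed simp

definition fan_angle :: "'i \<Rightarrow> real" where
  "fan_angle i = vangle (a i - v) (b i - v)"

lemma fan_angle:
  assumes "i \<in> I"
  shows "0 < fan_angle i" "fan_angle i < pi" "sin (fan_angle i) > 0"
    "cos (fan_angle i) = ((a i - v) \<bullet> (b i - v)) / (norm (a i - v) * norm (b i - v))"
proof -
  define x y where "x = a i - v" and "y = b i - v"
  have "x \<noteq> 0" "y \<noteq> 0" "\<not> collinear {0, x, y}"
    using edge_vectors_independent[OF assms] by (auto simp: x_def y_def collinear_lemma)
  then have "\<bar>x \<bullet> y\<bar> < norm x * norm y"
    using Cauchy_Schwarz_ineq2[of x y] norm_cauchy_schwarz_equal[of x y] by linarith
  then have "\<bar>(x \<bullet> y) / (norm x * norm y)\<bar> < 1"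
    using \<open>x \<noteq> 0\<close> \<open>y \<noteq> 0\<close> by (simp add: abs_divide divide_less_eq_1_pos)
  then have bounds: "-1 < (x \<bullet> y) / (norm x * norm y)" "(x \<bullet> y) / (norm x * norm y) < 1"
    by (auto simp only: abs_less_iff)
  have angle: "fan_angle i = arccos ((x \<bullet> y) / (norm x * norm y))"
    by (simp add: fan_angle_def vangle_def x_def y_def)
  show "0 < fan_angle i" "fan_angle i < pi"
    unfolding angle using arccos_lt_bounded[OF bounds] by auto
  then show "sin (fan_angle i) > 0"
    by (simp add: sin_gt_zero)
  show "cos (fan_angle i) = ((a i - v) \<bullet> (b i - v)) / (norm (a i - v) * norm (b i - v))"
    unfolding angle using bounds by (simp add: cos_arccos x_def y_def)
qed

text \<open>Small enough for the link arcs to stay inside their faces (link_coords_bounds).\<close>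
definition link_radius :: real where
  "link_radius = Min ((\<lambda>i. sin (fan_angle i) * min (norm (a i - v)) (norm (b i - v)) / 2) ` I)"

lemma link_radius_pos: "link_radius > 0"
proof -
  have "sin (fan_angle i) * min (norm (a i - v)) (norm (b i - v)) / 2 > 0" if "i \<in> I" for i
    using fan_angle(3)[OF that] edge_vectors_independent[OF that] by simp
  then show ?thesis
    unfolding link_radius_def using finite_index index_nonempty by (subst Min_gr_iff) auto
qed

lemma link_radius_le:
  "i \<in> I \<Longrightarrow> link_radius \<le> sin (fan_angle i) * min (norm (a i - v)) (norm (b i - v)) / 2"
  unfolding link_radius_def using finite_index by (intro Min_le) auto

definition link_coord1 :: "'i \<Rightarrow> real \<Rightarrow> real" where
  "link_coord1 i t = link_radius * sin (fan_angle i - t) / (sin (fan_angle i) * norm (a i - v))"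

definition link_coord2 :: "'i \<Rightarrow> real \<Rightarrow> real" where
  "link_coord2 i t = link_radius * sin t / (sin (fan_angle i) * norm (b i - v))"

text \<open>The point of face i at distance link_radius from v in the direction making the angle t
  with a i - v.\<close>
definition link_point :: "'i \<Rightarrow> real \<Rightarrow> pt3" where
  "link_point i t = face_point i (link_coord1 i t) (link_coord2 i t)"

lemma link_coords_bounds:
  assumes i: "i \<in> I" and t: "0 \<le> t" "t \<le> fan_angle i"
  shows "0 \<le> link_coord1 i t" "0 \<le> link_coord2 i t" "link_coord1 i t + link_coord2 i t \<le> 1"
proof -
  have sin: "sin (fan_angle i) > 0" "0 \<le> sin (fan_angle i - t)" "0 \<le> sin t"
    using fan_angle[OF i] t by (auto intro!: sin_ge_zero)
  have norms: "norm (a i - v) > 0" "norm (b i - v) > 0"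
    using edge_vectors_independent[OF i] by auto
  show "0 \<le> link_coord1 i t" "0 \<le> link_coord2 i t"
    using sin norms link_radius_pos by (simp_all add: link_coord1_def link_coord2_def)
  have "link_radius * sin (fan_angle i - t) \<le> link_radius" "link_radius * sin t \<le> link_radius"
    using link_radius_pos by (simp_all add: mult_left_le)
  moreover have "link_radius \<le> sin (fan_angle i) * min (norm (a i - v)) (norm (b i - v)) / 2"
    using link_radius_le[OF i] .
  moreover have "sin (fan_angle i) * min (norm (a i - v)) (norm (b i - v)) \<le> sin (fan_angle i) * norm (a i - v)"
    "sin (fan_angle i) * min (norm (a i - v)) (norm (b i - v)) \<le> sin (fan_angle i) * norm (b i - v)"
    using sin(1) by (simp_all add: mult_left_mono)
  ultimately have "link_radius * sin (fan_angle i - t) \<le> sin (fan_angle i) * norm (a i - v) / 2"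
    "link_radius * sin t \<le> sin (fan_angle i) * norm (b i - v) / 2"
    by linarith+
  then have "link_coord1 i t \<le> 1 / 2" "link_coord2 i t \<le> 1 / 2"
    using sin norms by (simp_all add: link_coord1_def link_coord2_def pos_divide_le_eq)
  then show "link_coord1 i t + link_coord2 i t \<le> 1"
    by simp
qed

lemma link_coords_pos:
  assumes i: "i \<in> I" and t: "0 < t" "t < fan_angle i"
  shows "link_coord1 i t > 0" "link_coord2 i t > 0"
proof -
  have "sin (fan_angle i) > 0" "sin (fan_angle i - t) > 0" "sin t > 0"
    using fan_angle[OF i] t by (auto intro!: sin_gt_zero)
  then show "link_coord1 i t > 0" "link_coord2 i t > 0"
    using edge_vectors_independent[OF i] link_radius_pos by (simp_all add: link_coord1_def link_coord2_def)
qed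

lemma link_point_in_face: "i \<in> I \<Longrightarrow> t \<in> {0..fan_angle i} \<Longrightarrow> link_point i t \<in> face i"
  unfolding link_point_def using link_coords_bounds by (auto intro: face_pointI)

lemma dist_link_point:
  assumes i: "i \<in> I"
  shows "dist v (link_point i t) = link_radius"
proof -
  note angle = fan_angle[OF i] and edges = edge_vectors_independent[OF i]
  obtain e1 e2 where frame: "e1 \<bullet> e1 = 1" "e2 \<bullet> e2 = 1" "e1 \<bullet> e2 = 0"
    and decomp: "\<And>r t. (r * sin (fan_angle i - t) / (sin (fan_angle i) * norm (a i - v))) *\<^sub>R (a i - v)
      + (r * sin t / (sin (fan_angle i) * norm (b i - v))) *\<^sub>R (b i - v)
      = r *\<^sub>R (cos t *\<^sub>R e1 + sin t *\<^sub>R e2)"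
    using sector_frame[OF edges(1,2) _ angle(4)] angle(3) by auto
  have "link_point i t - v = link_radius *\<^sub>R (cos t *\<^sub>R e1 + sin t *\<^sub>R e2)"
    using decomp by (simp add: link_point_def face_point_def link_coord1_def link_coord2_def)
  then have "norm (link_point i t - v) = link_radius"
    using link_radius_pos frame by (simp add: norm_cos_sin_orthonormal)
  then show ?thesis
    by (metis dist_commute dist_norm)
qed

lemma inj_on_link_point:
  assumes i: "i \<in> I"
  shows "inj_on (link_point i) {0..fan_angle i}"
proof
  fix t t' assume t: "t \<in> {0..fan_angle i}" "t' \<in> {0..fan_angle i}"
    and eq: "link_point i t = link_point i t'"
  have "link_coord1 i t = link_coord1 i t'" "link_coord2 i t = link_coord2 i t'"
    using eq face_point_eq_iff[OF i] unfolding link_point_def by blast+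
  moreover have "sin (fan_angle i) * norm (a i - v) \<noteq> 0" "sin (fan_angle i) * norm (b i - v) \<noteq> 0"
    using fan_angle(3)[OF i] edge_vectors_independent[OF i] by simp_all
  ultimately have "sin (fan_angle i - t) = sin (fan_angle i - t')" "sin t = sin t'"
    using link_radius_pos by (simp_all add: link_coord1_def link_coord2_def divide_cancel_right)
  then have "sin (fan_angle i) * cos t = sin (fan_angle i) * cos t'"
    by (simp add: sin_diff)
  then have "cos t = cos t'"
    using fan_angle(3)[OF i] by simp
  then show "t = t'"
    by (rule cos_inj_pi[rotated 4]) (use t fan_angle(2)[OF i] in auto)
qed

lemma link_point_notin_other_face:
  assumes ij: "i \<in> I" "j \<in> I" "i \<noteq> j" and t: "0 < t" "t < fan_angle i"
  shows "link_point i t \<notin> face j"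
proof
  assume "link_point i t \<in> face j"
  then have both: "link_point i t \<in> face i \<inter> face j"
    using link_point_in_face[OF ij(1)] t by auto
  from face_Int_face[OF ij] have "\<exists>w\<in>{a i, b i}. link_point i t \<in> closed_segment v w"
  proof
    assume "face i \<inter> face j = {v}"
    then show ?thesis
      using both by auto
  next
    assume "\<exists>w\<in>{a i, b i} \<inter> {a j, b j}. face i \<inter> face j = closed_segment v w"
    then show ?thesis
      using both by auto
  qed
  then obtain w where w: "w \<in> {a i, b i}" "link_point i t \<in> closed_segment v w"
    by blast
  then obtain \<mu> where "link_point i t = (1 - \<mu>) *\<^sub>R v + \<mu> *\<^sub>R w"
    unfolding closed_segment_def by blast
  then have "link_point i t = v + \<mu> *\<^sub>R (w - v)"
    by (simp add: algebra_simps)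
  then have "link_point i t = face_point i \<mu> 0 \<or> link_point i t = face_point i 0 \<mu>"
    using w(1) by (auto simp: face_point_def)
  then show False
    using link_coords_pos[OF ij(1) t] by (auto simp: link_point_def face_point_eq_iff[OF ij(1)])
qed

lemma continuous_on_link_point: "continuous_on S (link_point i)"
  unfolding link_point_def face_point_def link_coord1_def link_coord2_def divide_inverse
  by (intro continuous_intros)

end

section \<open>Flat unfoldings of a fan\<close>

locale fan_unfolding = triangle_fan +
  fixes B C :: "pt3 set" and f :: "pt3 \<Rightarrow> pt2"
  assumes cutting: "is_cutting (\<Union>i\<in>I. tri v (a i) (b i)) B C"
    and embedding: "flat_embedding ((\<lambda>i. tri v (a i) (b i)) ` I) C f"
begin

abbreviation comp where
  "comp i x \<equiv> connected_component_set (face i - C) x"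

lemma cut_segments: obtains S where "finite S" "C = (\<Union>(p, q)\<in>S. closed_segment p q)"
  using cutting unfolding is_cutting_def by blast

lemma closed_cut: "closed C"
proof -
  obtain S where "finite S" "C = (\<Union>(p, q)\<in>S. closed_segment p q)"
    by (rule cut_segments)
  then show ?thesis
    by (auto intro!: closed_UN simp: closed_segment split: prod.splits)
qed

lemma finite_cut_Int_sphere: "finite (C \<inter> sphere c r)"
proof -
  obtain S where S: "finite S" "C = (\<Union>(p, q)\<in>S. closed_segment p q)"
    by (rule cut_segments)
  have "finite (sphere c r \<inter> closed_segment p q)" for p q
    by (metis Int_commute finite_closed_segment_Int_sphere)
  then have "finite (\<Union>pq\<in>S. sphere c r \<inter> closed_segment (fst pq) (snd pq))"
    by (rule finite_UN_I[OF S(1)])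
  moreover have "C \<inter> sphere c r = (\<Union>pq\<in>S. sphere c r \<inter> closed_segment (fst pq) (snd pq))"
    unfolding S(2) Int_commute[of _ "sphere c r"] Int_UN_distrib by (simp add: case_prod_beta)
  ultimately show ?thesis
    by simp
qed

lemma connected_fan_minus_cut: "connected ((\<Union>i\<in>I. face i) - C)"
  using cutting unfolding is_cutting_def face_def by blast

lemma inj_on_fan_minus_cut: "inj_on f ((\<Union>i\<in>I. face i) - C)"
  using embedding unfolding flat_embedding_def face_def by blast

lemma isometric_on_comp:
  assumes "i \<in> I" "y \<in> comp i x" "y' \<in> comp i x"
  shows "dist (f y) (f y') = dist y y'"
proof -
  have "y \<in> face i - C" "comp i y = comp i x"
    using assms(2) connected_component_subset connected_component_eq by blast+
  then show ?thesis
    using embedding assms(1,3) unfolding flat_embedding_def face_def by auto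
qed

lemma comp_contains_ball:
  assumes "x \<in> face i - C"
  obtains r where "r > 0" "ball x r \<inter> face i \<subseteq> comp i x"
proof -
  obtain r where r: "r > 0" "ball x r \<subseteq> - C"
    using assms closed_cut open_contains_ball[of "- C"] by auto
  have "ball x r \<inter> face i \<subseteq> comp i x"
    using assms r by (intro connected_component_maximal convex_connected convex_Int convex_face) auto
  with r show ?thesis
    using that by blast
qed

lemma eventually_homothety_in_comp:
  assumes x: "x \<in> face i - C" and z: "z \<in> face i"
  shows "\<forall>\<^sub>F \<epsilon> in at_right 0. x + \<epsilon> *\<^sub>R (z - x) \<in> comp i x"
proof -
  obtain r where r: "r > 0" "ball x r \<inter> face i \<subseteq> comp i x"
    using comp_contains_ball[OF x] by blast
  have "((\<lambda>\<epsilon>. x + \<epsilon> *\<^sub>R (z - x)) \<longlongrightarrow> x) (at_right 0)"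
    by (auto intro!: tendsto_eq_intros)
  then have "\<forall>\<^sub>F \<epsilon> in at_right 0. x + \<epsilon> *\<^sub>R (z - x) \<in> ball x r"
    using r(1) by (intro topological_tendstoD) auto
  moreover have "\<forall>\<^sub>F \<epsilon> in at_right (0::real). 0 < \<epsilon> \<and> \<epsilon> < 1"
    by (rule eventually_at_rightI[of 0 1]) auto
  ultimately show ?thesis
  proof eventually_elim
    case (elim \<epsilon>)
    have "(1 - \<epsilon>) *\<^sub>R x + \<epsilon> *\<^sub>R z \<in> face i"
      using x z elim convex_face by (auto intro: convexD)
    moreover have "(1 - \<epsilon>) *\<^sub>R x + \<epsilon> *\<^sub>R z = x + \<epsilon> *\<^sub>R (z - x)"
      by (simp add: algebra_simps)
    ultimately show ?case
      using elim r(2) by auto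
  qed
qed

lemma comp_contains_frame:
  assumes x: "x \<in> face i - C"
  obtains s t \<delta> where "\<delta> > 0" "face_point i s t \<in> comp i x" "face_point i (s + \<delta>) t \<in> comp i x"
    "face_point i s (t + \<delta>) \<in> comp i x"
proof -
  obtain s t where st: "x = face_point i s t"
    using x face_pointE by blast
  have near: "\<forall>\<^sub>F \<epsilon> in at_right 0. face_point i ((1 - \<epsilon>) * s + \<epsilon> * s') ((1 - \<epsilon>) * t + \<epsilon> * t') \<in> comp i x"
    if "0 \<le> s'" "0 \<le> t'" "s' + t' \<le> 1" for s' t'
  proof -
    have "x + \<epsilon> *\<^sub>R (face_point i s' t' - x)
        = face_point i ((1 - \<epsilon>) * s + \<epsilon> * s') ((1 - \<epsilon>) * t + \<epsilon> * t')" for \<epsilon>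
      by (simp add: st face_point_def algebra_simps)
    then show ?thesis
      using eventually_homothety_in_comp[OF x face_pointI[OF that]] by simp
  qed
  have "\<forall>\<^sub>F \<epsilon> in at_right 0. 0 < \<epsilon> \<and>
      face_point i ((1 - \<epsilon>) * s + \<epsilon> * (1/3)) ((1 - \<epsilon>) * t + \<epsilon> * (1/3)) \<in> comp i x \<and>
      face_point i ((1 - \<epsilon>) * s + \<epsilon> * (2/3)) ((1 - \<epsilon>) * t + \<epsilon> * (1/3)) \<in> comp i x \<and>
      face_point i ((1 - \<epsilon>) * s + \<epsilon> * (1/3)) ((1 - \<epsilon>) * t + \<epsilon> * (2/3)) \<in> comp i x"
    by (intro eventually_conj eventually_at_right_less near) simp_all
  moreover have "at_right (0::real) \<noteq> bot"
    by simp
  ultimately obtain \<epsilon> where \<epsilon>: "0 < \<epsilon>"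
    "face_point i ((1 - \<epsilon>) * s + \<epsilon> * (1/3)) ((1 - \<epsilon>) * t + \<epsilon> * (1/3)) \<in> comp i x"
    "face_point i ((1 - \<epsilon>) * s + \<epsilon> * (2/3)) ((1 - \<epsilon>) * t + \<epsilon> * (1/3)) \<in> comp i x"
    "face_point i ((1 - \<epsilon>) * s + \<epsilon> * (1/3)) ((1 - \<epsilon>) * t + \<epsilon> * (2/3)) \<in> comp i x"
    using eventually_happens' by blast
  define s1 t1 where "s1 = (1 - \<epsilon>) * s + \<epsilon> * (1/3)" and "t1 = (1 - \<epsilon>) * t + \<epsilon> * (1/3)"
  have shift: "s1 + \<epsilon> / 3 = (1 - \<epsilon>) * s + \<epsilon> * (2/3)" "t1 + \<epsilon> / 3 = (1 - \<epsilon>) * t + \<epsilon> * (2/3)"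
    by (simp_all add: s1_def t1_def)
  have "face_point i s1 t1 \<in> comp i x"
    using \<epsilon>(2) by (simp only: s1_def t1_def)
  moreover have "face_point i (s1 + \<epsilon> / 3) t1 \<in> comp i x"
    using \<epsilon>(3) by (simp only: shift t1_def)
  moreover have "face_point i s1 (t1 + \<epsilon> / 3) \<in> comp i x"
    using \<epsilon>(4) by (simp only: shift s1_def)
  ultimately show ?thesis
    using \<epsilon>(1) by (intro that) auto
qed

lemma common_comp_point_towards_vertex:
  assumes "x \<in> face i - C" "x \<in> face j - C"
  obtains \<epsilon> where "0 < \<epsilon>" "\<epsilon> < 1" "x + \<epsilon> *\<^sub>R (v - x) \<in> comp i x" "x + \<epsilon> *\<^sub>R (v - x) \<in> comp j x"
proof -
  have "\<forall>\<^sub>F \<epsilon> in at_right (0::real). 0 < \<epsilon> \<and> \<epsilon> < 1"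
    by (rule eventually_at_rightI[of 0 1]) auto
  then have "\<forall>\<^sub>F \<epsilon> in at_right 0.
      (0 < \<epsilon> \<and> \<epsilon> < 1) \<and> x + \<epsilon> *\<^sub>R (v - x) \<in> comp i x \<and> x + \<epsilon> *\<^sub>R (v - x) \<in> comp j x"
    using eventually_homothety_in_comp[OF assms(1) vertex_in_face]
      eventually_homothety_in_comp[OF assms(2) vertex_in_face]
    by (simp add: eventually_conj_iff)
  moreover have "at_right (0::real) \<noteq> bot"
    by simp
  ultimately show ?thesis
    using that eventually_happens' by blast
qed

text \<open>P is where the affine extension of f from the component of x sends v; v itself may
  well be cut away.\<close>
definition affine_on_comp where
  "affine_on_comp i x P W1 W2 \<longleftrightarrow>
     (\<forall>s t. face_point i s t \<in> comp i x \<longrightarrow> f (face_point i s t) = P + s *\<^sub>R W1 + t *\<^sub>R W2)"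

lemma affine_on_compD:
  "affine_on_comp i x P W1 W2 \<Longrightarrow> face_point i s t \<in> comp i x \<Longrightarrow> f (face_point i s t) = P + s *\<^sub>R W1 + t *\<^sub>R W2"
  unfolding affine_on_comp_def by blast

lemma affine_on_comp_cong: "y \<in> comp i x \<Longrightarrow> affine_on_comp i y = affine_on_comp i x"
  using connected_component_eq[of y "face i - C" x] by (intro ext) (simp add: affine_on_comp_def)

lemma affine_on_comp_exists:
  assumes i: "i \<in> I" and x: "x \<in> face i - C"
  obtains P W1 W2 where "W1 \<bullet> W1 = (a i - v) \<bullet> (a i - v)" "W2 \<bullet> W2 = (b i - v) \<bullet> (b i - v)"
    "W1 \<bullet> W2 = (a i - v) \<bullet> (b i - v)" "affine_on_comp i x P W1 W2"
proof -
  obtain s t \<delta> where \<delta>: "\<delta> > 0" and frame: "face_point i s t \<in> comp i x"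
    "face_point i (s + \<delta>) t \<in> comp i x" "face_point i s (t + \<delta>) \<in> comp i x"
    by (rule comp_contains_frame[OF x])
  define u D1 D2 where "u = face_point i s t" and "D1 = \<delta> *\<^sub>R (a i - v)" and "D2 = \<delta> *\<^sub>R (b i - v)"
  have u: "u \<in> comp i x" "u + D1 \<in> comp i x" "u + D2 \<in> comp i x"
    using frame by (simp_all add: u_def D1_def D2_def face_point_def algebra_simps)
  have iso: "\<forall>y\<in>comp i x. \<forall>y'\<in>comp i x. dist (f y) (f y') = dist y y'"
    using isometric_on_comp[OF i] by blast
  define F1 F2 where "F1 = f (u + D1) - f u" and "F2 = f (u + D2) - f u"
  define W1 W2 where "W1 = F1 /\<^sub>R \<delta>" and "W2 = F2 /\<^sub>R \<delta>"
  define P where "P = f u - s *\<^sub>R W1 - t *\<^sub>R W2"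
  have affine: "affine_on_comp i x P W1 W2"
    unfolding affine_on_comp_def
  proof (intro allI impI)
    fix s' t' assume y: "face_point i s' t' \<in> comp i x"
    have "((s' - s) / \<delta>) *\<^sub>R D1 = (s' - s) *\<^sub>R (a i - v)"
      "((t' - t) / \<delta>) *\<^sub>R D2 = (t' - t) *\<^sub>R (b i - v)"
      using \<delta> by (simp_all add: D1_def D2_def)
    then have "face_point i s' t' = u + ((s' - s) / \<delta>) *\<^sub>R D1 + ((t' - t) / \<delta>) *\<^sub>R D2"
      by (simp only:) (simp add: u_def face_point_def algebra_simps)
    then have "f (face_point i s' t')
        = f u + ((s' - s) / \<delta>) *\<^sub>R (f (u + D1) - f u) + ((t' - t) / \<delta>) *\<^sub>R (f (u + D2) - f u)"
      by (rule isometry_on_affine_frame[OF iso u y])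
    then show "f (face_point i s' t') = P + s' *\<^sub>R W1 + t' *\<^sub>R W2"
      by (simp add: P_def W1_def W2_def F1_def F2_def divide_inverse algebra_simps)
  qed
  have "F1 \<bullet> F1 = \<delta> * (\<delta> * ((a i - v) \<bullet> (a i - v)))"
    "F2 \<bullet> F2 = \<delta> * (\<delta> * ((b i - v) \<bullet> (b i - v)))"
    "F1 \<bullet> F2 = \<delta> * (\<delta> * ((a i - v) \<bullet> (b i - v)))"
    using isometry_on_inner_diff[OF iso u(2) u(2) u(1)] isometry_on_inner_diff[OF iso u(3) u(3) u(1)]
      isometry_on_inner_diff[OF iso u(2) u(3) u(1)]
    by (simp_all add: F1_def F2_def D1_def D2_def)
  moreover have "inverse \<delta> * (inverse \<delta> * (\<delta> * \<delta>)) = 1"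
    using \<delta> by (simp add: field_simps)
  ultimately have "W1 \<bullet> W1 = (a i - v) \<bullet> (a i - v)" "W2 \<bullet> W2 = (b i - v) \<bullet> (b i - v)"
    "W1 \<bullet> W2 = (a i - v) \<bullet> (b i - v)"
    by (simp_all add: W1_def W2_def mult.assoc[symmetric])
  with affine show thesis
    using that by blast
qed

lemma affine_on_comp_unique:
  assumes x: "x \<in> face i - C"
    and P: "affine_on_comp i x P W1 W2" and Q: "affine_on_comp i x Q V1 V2"
  shows "P = Q"
proof -
  obtain s t \<delta> where \<delta>: "\<delta> > 0" and frame: "face_point i s t \<in> comp i x"
    "face_point i (s + \<delta>) t \<in> comp i x" "face_point i s (t + \<delta>) \<in> comp i x"
    by (rule comp_contains_frame[OF x])
  have at_frame: "P + s' *\<^sub>R W1 + t' *\<^sub>R W2 = Q + s' *\<^sub>R V1 + t' *\<^sub>R V2"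
    if "face_point i s' t' \<in> comp i x" for s' t'
    using affine_on_compD[OF P that] affine_on_compD[OF Q that] by simp
  have lines1: "(P + t *\<^sub>R W2) + s *\<^sub>R W1 = (Q + t *\<^sub>R V2) + s *\<^sub>R V1"
      "(P + t *\<^sub>R W2) + (s + \<delta>) *\<^sub>R W1 = (Q + t *\<^sub>R V2) + (s + \<delta>) *\<^sub>R V1"
    and lines2: "(P + s *\<^sub>R W1) + t *\<^sub>R W2 = (Q + s *\<^sub>R V1) + t *\<^sub>R V2"
      "(P + s *\<^sub>R W1) + (t + \<delta>) *\<^sub>R W2 = (Q + s *\<^sub>R V1) + (t + \<delta>) *\<^sub>R V2"
    using at_frame[OF frame(1)] at_frame[OF frame(2)] at_frame[OF frame(3)]
    by (simp_all only: ac_simps)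
  have "P + t *\<^sub>R W2 = Q + t *\<^sub>R V2" "P + s *\<^sub>R W1 = Q + s *\<^sub>R V1"
    by (rule eq_if_lines_agree_twice[OF lines1], use \<delta> in simp)
      (rule eq_if_lines_agree_twice[OF lines2], use \<delta> in simp)
  then have "P - Q = s *\<^sub>R (V1 - W1)" "P - Q = t *\<^sub>R (V2 - W2)"
    by (simp_all add: algebra_simps)
  moreover have "P - Q = s *\<^sub>R (V1 - W1) + t *\<^sub>R (V2 - W2)"
    using at_frame[OF frame(1)] by (simp add: algebra_simps)
  ultimately have "P - Q = (P - Q) + (P - Q)"
    by metis
  then show "P = Q"
    by simp
qed

lemma affine_on_comp_along_edge:
  assumes "affine_on_comp i x P W1 W2" "w \<in> {a i, b i}"
  obtains A where "\<And>\<mu>. v + \<mu> *\<^sub>R (w - v) \<in> comp i x \<Longrightarrow> f (v + \<mu> *\<^sub>R (w - v)) = P + \<mu> *\<^sub>R A"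
proof -
  have "v + \<mu> *\<^sub>R (a i - v) = face_point i \<mu> 0" "v + \<mu> *\<^sub>R (b i - v) = face_point i 0 \<mu>" for \<mu>
    by (simp_all add: face_point_def)
  then show ?thesis
    using assms affine_on_compD[OF assms(1)] that[of W1] that[of W2] by auto
qed

lemma affine_on_comp_shared_edge:
  assumes ij: "i \<in> I" "j \<in> I" "i \<noteq> j" and x: "x \<in> face i - C" "x \<in> face j"
    and P: "affine_on_comp i x P W1 W2" and Q: "affine_on_comp j x Q V1 V2"
  shows "P = Q"
proof (cases "x = v")
  case True
  then have "face_point i 0 0 \<in> comp i x" "face_point j 0 0 \<in> comp j x"
    using x by (simp_all add: face_point_def)
  then show ?thesis
    using affine_on_compD[OF P] affine_on_compD[OF Q] by (fastforce simp: face_point_def)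
next
  case False
  have xj: "x \<in> face j - C"
    using x by simp
  obtain w where w: "w \<in> {a i, b i}" "w \<in> {a j, b j}" "face i \<inter> face j = closed_segment v w"
    using face_Int_face[OF ij] x False by blast
  obtain A where A: "\<And>\<mu>. v + \<mu> *\<^sub>R (w - v) \<in> comp i x \<Longrightarrow> f (v + \<mu> *\<^sub>R (w - v)) = P + \<mu> *\<^sub>R A"
    using affine_on_comp_along_edge[OF P w(1)] by blast
  obtain B where B: "\<And>\<mu>. v + \<mu> *\<^sub>R (w - v) \<in> comp j x \<Longrightarrow> f (v + \<mu> *\<^sub>R (w - v)) = Q + \<mu> *\<^sub>R B"
    using affine_on_comp_along_edge[OF Q w(2)] by blast
  obtain \<kappa> where "x = (1 - \<kappa>) *\<^sub>R v + \<kappa> *\<^sub>R w"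
    using w(3) x unfolding closed_segment_def by blast
  then have x_eq: "x = v + \<kappa> *\<^sub>R (w - v)" and "\<kappa> \<noteq> 0"
    using False by (auto simp: algebra_simps)
  obtain \<epsilon> where \<epsilon>: "0 < \<epsilon>" "\<epsilon> < 1" "x + \<epsilon> *\<^sub>R (v - x) \<in> comp i x"
    "x + \<epsilon> *\<^sub>R (v - x) \<in> comp j x"
    by (rule common_comp_point_towards_vertex[OF x(1) xj])
  moreover have "x + \<epsilon> *\<^sub>R (v - x) = v + ((1 - \<epsilon>) * \<kappa>) *\<^sub>R (w - v)"
    by (simp add: x_eq algebra_simps)
  moreover have "x \<in> comp i x" "x \<in> comp j x"
    using x xj by auto
  ultimately have "P + \<kappa> *\<^sub>R A = Q + \<kappa> *\<^sub>R B" "P + ((1 - \<epsilon>) * \<kappa>) *\<^sub>R A = Q + ((1 - \<epsilon>) * \<kappa>) *\<^sub>R B"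
    using A B x_eq by metis+
  moreover have "\<kappa> \<noteq> (1 - \<epsilon>) * \<kappa>"
    using \<open>\<kappa> \<noteq> 0\<close> \<epsilon>(1) by simp
  ultimately show ?thesis
    by (rule eq_if_lines_agree_twice)
qed

definition developed_vertex :: "pt3 \<Rightarrow> pt2" where
  "developed_vertex x = (SOME P. \<exists>i\<in>I. x \<in> face i - C \<and> (\<exists>W1 W2. affine_on_comp i x P W1 W2))"

lemma developed_vertex_eq:
  assumes i: "i \<in> I" and x: "x \<in> face i - C" and P: "affine_on_comp i x P W1 W2"
  shows "developed_vertex x = P"
proof -
  have "\<exists>P. \<exists>i\<in>I. x \<in> face i - C \<and> (\<exists>W1 W2. affine_on_comp i x P W1 W2)"
    using assms by blast
  from someI_ex[OF this] obtain j V1 V2 where j: "j \<in> I" "x \<in> face j - C"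
    and Q: "affine_on_comp j x (developed_vertex x) V1 V2"
    unfolding developed_vertex_def by blast
  show ?thesis
  proof (cases "i = j")
    case True
    then show ?thesis
      using affine_on_comp_unique[OF x P] Q by simp
  next
    case False
    then show ?thesis
      using affine_on_comp_shared_edge[OF i j(1) False x _ P Q] j(2) by simp
  qed
qed

lemma developed_vertex_locally_const:
  assumes x: "x \<in> (\<Union>i\<in>I. face i) - C"
  shows "\<forall>\<^sub>F y in at x within (\<Union>i\<in>I. face i) - C. developed_vertex x = developed_vertex y"
proof -
  have near: "\<forall>\<^sub>F y in nhds x. \<forall>j\<in>I. y \<in> face j \<longrightarrow> x \<in> face j \<and> y \<in> comp j x"
  proof (rule eventually_ball_finite[OF finite_index], intro ballI)
    fix j
    show "\<forall>\<^sub>F y in nhds x. y \<in> face j \<longrightarrow> x \<in> face j \<and> y \<in> comp j x"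
    proof (cases "x \<in> face j")
      case True
      then obtain r where "r > 0" "ball x r \<inter> face j \<subseteq> comp j x"
        using comp_contains_ball[of x j] x by auto
      then show ?thesis
        using True eventually_nhds_in_open[of "ball x r" x] by (auto elim!: eventually_mono)
    next
      case False
      then show ?thesis
        using closed_face[of j] eventually_nhds_in_open[of "- face j" x] by (auto elim!: eventually_mono)
    qed
  qed
  show ?thesis
    unfolding eventually_at_filter
  proof (rule eventually_mono[OF near], intro impI)
    fix y assume near_y: "\<forall>j\<in>I. y \<in> face j \<longrightarrow> x \<in> face j \<and> y \<in> comp j x"
      and y: "y \<in> (\<Union>i\<in>I. face i) - C"
    then obtain j where j: "j \<in> I" "y \<in> face j" "y \<in> comp j x" "x \<in> face j - C"
      using x by auto
    obtain P W1 W2 where P: "affine_on_comp j x P W1 W2"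
      using affine_on_comp_exists[OF j(1,4)] by blast
    then have "affine_on_comp j y P W1 W2"
      using affine_on_comp_cong[OF j(3)] by simp
    then show "developed_vertex x = developed_vertex y"
      using developed_vertex_eq[OF j(1,4) P] developed_vertex_eq[OF j(1)] j(2) y by simp
  qed
qed

lemma developed_vertex_const:
  obtains p where "\<And>x. x \<in> (\<Union>i\<in>I. face i) - C \<Longrightarrow> developed_vertex x = p"
  using connected_local_const[OF connected_fan_minus_cut] developed_vertex_locally_const by metis

definition cut_params where
  "cut_params i = {t \<in> {0<..<fan_angle i}. link_point i t \<in> C}"

lemma finite_cut_params:
  assumes i: "i \<in> I"
  shows "finite (cut_params i)"
proof -
  have "link_point i ` cut_params i \<subseteq> C \<inter> sphere v link_radius"
    using dist_link_point[OF i] by (auto simp: cut_params_def)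
  moreover have "inj_on (link_point i) (cut_params i)"
    using inj_on_link_point[OF i] by (rule inj_on_subset) (auto simp: cut_params_def)
  ultimately show ?thesis
    using finite_cut_Int_sphere by (metis finite_imageD finite_subset)
qed

lemma link_arc_in_comp:
  assumes i: "i \<in> I" and ce: "0 \<le> c" "c < e" "e \<le> fan_angle i"
    and uncut: "{c<..<e} \<inter> cut_params i = {}"
  shows "link_point i ((c + e) / 2) \<in> face i - C"
    and "link_point i ` {c<..<e} \<subseteq> comp i (link_point i ((c + e) / 2))"
proof -
  have arc: "link_point i ` {c<..<e} \<subseteq> face i - C"
  proof
    fix x assume "x \<in> link_point i ` {c<..<e}"
    then obtain t where t: "t \<in> {c<..<e}" "x = link_point i t"
      by blast
    then show "x \<in> face i - C"
      using ce uncut link_point_in_face[OF i, of t] by (auto simp: cut_params_def)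
  qed
  moreover have mid: "link_point i ((c + e) / 2) \<in> link_point i ` {c<..<e}"
    using ce by simp
  ultimately show "link_point i ((c + e) / 2) \<in> face i - C"
    by blast
  show "link_point i ` {c<..<e} \<subseteq> comp i (link_point i ((c + e) / 2))"
    using connected_continuous_image[OF continuous_on_link_point connected_Ioo] arc mid
    by (intro connected_component_maximal) auto
qed

lemma link_image_on_circle:
  assumes p: "\<And>x. x \<in> (\<Union>i\<in>I. face i) - C \<Longrightarrow> developed_vertex x = p"
    and i: "i \<in> I" and ce: "0 \<le> c" "c < e" "e \<le> fan_angle i"
    and uncut: "{c<..<e} \<inter> cut_params i = {}"
  obtains \<sigma> \<theta> where "\<sigma> = 1 \<or> \<sigma> = -1"
    "\<And>t. t \<in> {c<..<e} \<Longrightarrow> f (link_point i t) = p + link_radius *\<^sub>R circle_point (\<theta> + \<sigma> * t)"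
proof -
  define x0 where "x0 = link_point i ((c + e) / 2)"
  note x0 = link_arc_in_comp(1)[OF i ce uncut, folded x0_def]
    and arc_comp = link_arc_in_comp(2)[OF i ce uncut, folded x0_def]
  obtain P W1 W2 where gram: "W1 \<bullet> W1 = (a i - v) \<bullet> (a i - v)" "W2 \<bullet> W2 = (b i - v) \<bullet> (b i - v)"
    "W1 \<bullet> W2 = (a i - v) \<bullet> (b i - v)" and P: "affine_on_comp i x0 P W1 W2"
    by (rule affine_on_comp_exists[OF i x0])
  have "x0 \<in> (\<Union>i\<in>I. face i) - C"
    using x0 i by blast
  then have "P = p"
    using developed_vertex_eq[OF i x0 P] p by simp
  have norms: "norm W1 = norm (a i - v)" "norm W2 = norm (b i - v)"
    using gram by (simp_all add: norm_eq_sqrt_inner)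
  note angle = fan_angle[OF i] and edges = edge_vectors_independent[OF i]
  have "W1 \<noteq> 0" "W2 \<noteq> 0"
    using norms edges(1,2) by (metis norm_eq_zero)+
  moreover have "sin (fan_angle i) \<noteq> 0" "cos (fan_angle i) = (W1 \<bullet> W2) / (norm W1 * norm W2)"
    using angle(3,4) gram(3) norms by simp_all
  ultimately obtain E1 E2 where orth: "E1 \<bullet> E1 = 1" "E2 \<bullet> E2 = 1" "E1 \<bullet> E2 = 0"
    and decomp: "\<And>r t. (r * sin (fan_angle i - t) / (sin (fan_angle i) * norm W1)) *\<^sub>R W1
      + (r * sin t / (sin (fan_angle i) * norm W2)) *\<^sub>R W2 = r *\<^sub>R (cos t *\<^sub>R E1 + sin t *\<^sub>R E2)"
    by (rule sector_frame) auto
  obtain \<sigma> \<theta> where \<sigma>: "\<sigma> = 1 \<or> \<sigma> = -1"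
    and circle: "\<And>t. cos t *\<^sub>R E1 + sin t *\<^sub>R E2 = circle_point (\<theta> + \<sigma> * t)"
    using orth by (rule orthonormal_pair_circle_param) auto
  show thesis
  proof (rule that[OF \<sigma>])
    fix t assume t: "t \<in> {c<..<e}"
    have "link_point i t \<in> comp i x0"
      using arc_comp t by blast
    then have "f (link_point i t) = P + link_coord1 i t *\<^sub>R W1 + link_coord2 i t *\<^sub>R W2"
      unfolding link_point_def by (rule affine_on_compD[OF P])
    also have "\<dots> = p + link_radius *\<^sub>R (cos t *\<^sub>R E1 + sin t *\<^sub>R E2)"
      using decomp[of link_radius t] \<open>P = p\<close> norms
      by (simp add: link_coord1_def link_coord2_def add.assoc)
    finally show "f (link_point i t) = p + link_radius *\<^sub>R circle_point (\<theta> + \<sigma> * t)"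
      by (simp add: circle)
  qed
qed

definition link_hits where
  "link_hits p M i = {t \<in> {0<..<fan_angle i} - cut_params i. f (link_point i t) \<in> circle_grid p link_radius M}"

lemma link_point_in_fan_minus_cut:
  assumes i: "i \<in> I" and t: "t \<in> link_hits p M i"
  shows "link_point i t \<in> (\<Union>i\<in>I. face i) - C"
proof -
  have "t \<in> {0..fan_angle i}" "link_point i t \<notin> C"
    using t by (auto simp: link_hits_def cut_params_def)
  then show ?thesis
    using link_point_in_face[OF i] i by blast
qed

lemma inj_on_link_hits: "inj_on (\<lambda>(i, t). f (link_point i t)) (Sigma I (link_hits p M))"
proof (rule inj_onI, clarify)
  fix i t j t' assume i: "i \<in> I" "t \<in> link_hits p M i" and j: "j \<in> I" "t' \<in> link_hits p M j"
    and eq: "f (link_point i t) = f (link_point j t')"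
  have same: "link_point i t = link_point j t'"
    using inj_onD[OF inj_on_fan_minus_cut eq link_point_in_fan_minus_cut[OF i]
        link_point_in_fan_minus_cut[OF j]] .
  have t: "0 < t" "t < fan_angle i" "0 < t'" "t' < fan_angle j"
    using i(2) j(2) by (auto simp: link_hits_def)
  have "i = j"
  proof (rule ccontr)
    assume "i \<noteq> j"
    then have "link_point i t \<notin> face j"
      using link_point_notin_other_face[OF i(1) j(1) _ t(1,2)] by blast
    moreover have "link_point j t' \<in> face j"
      using link_point_in_face[OF j(1)] t(3,4) by simp
    ultimately show False
      using same by simp
  qed
  moreover have "t = t'"
    using inj_onD[OF inj_on_link_point[OF i(1)], of t t'] same t \<open>i = j\<close> by simp
  ultimately show "i = j \<and> t = t'"
    by simp
qed

lemma finite_link_hits: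
  assumes i: "i \<in> I"
  shows "finite (link_hits p M i)"
proof -
  have "inj_on (\<lambda>t. f (link_point i t)) (link_hits p M i)"
    using inj_on_link_hits[of p M] i unfolding inj_on_def by auto
  moreover have "(\<lambda>t. f (link_point i t)) ` link_hits p M i \<subseteq> circle_grid p link_radius M"
    by (auto simp: link_hits_def)
  ultimately show ?thesis
    using finite_circle_grid by (metis finite_imageD finite_subset)
qed

lemma sum_card_link_hits_le: "(\<Sum>i\<in>I. card (link_hits p M i)) \<le> M"
proof -
  let ?g = "\<lambda>(i, t). f (link_point i t)"
  have "(\<Sum>i\<in>I. card (link_hits p M i)) = card (Sigma I (link_hits p M))"
    using finite_index finite_link_hits by (simp add: card_SigmaI)
  also have "\<dots> = card (?g ` Sigma I (link_hits p M))"
    using card_image[OF inj_on_link_hits] by simp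
  also have "\<dots> \<le> card (circle_grid p link_radius M)"
    by (rule card_mono[OF finite_circle_grid]) (auto simp: link_hits_def)
  also have "\<dots> \<le> M"
    by (rule card_circle_grid_le)
  finally show ?thesis .
qed

lemma card_link_hits_ge:
  assumes p: "\<And>x. x \<in> (\<Union>i\<in>I. face i) - C \<Longrightarrow> developed_vertex x = p"
    and M: "M > 0" and i: "i \<in> I"
  shows "real (card (link_hits p M i)) \<ge> fan_angle i * M / (2 * pi) - card (cut_params i) - 1"
proof -
  define h where "h = 2 * pi / M"
  have h: "h > 0"
    using M by (simp add: h_def)
  have lattice: "\<exists>\<theta> \<sigma>. (\<sigma> = 1 \<or> \<sigma> = -1) \<and>
      (\<forall>t\<in>{c<..<e}. t \<in> link_hits p M i \<longleftrightarrow> (\<exists>m::int. \<theta> + \<sigma> * t = m * h))"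
    if ce: "0 \<le> c" "c < e" "e \<le> fan_angle i" "{c<..<e} \<inter> cut_params i = {}" for c e
  proof -
    obtain \<sigma> \<theta> where \<sigma>: "\<sigma> = 1 \<or> \<sigma> = -1"
      and image: "\<And>t. t \<in> {c<..<e} \<Longrightarrow> f (link_point i t) = p + link_radius *\<^sub>R circle_point (\<theta> + \<sigma> * t)"
      by (rule link_image_on_circle[OF p i ce]) auto
    have "t \<in> link_hits p M i \<longleftrightarrow> (\<exists>m::int. \<theta> + \<sigma> * t = m * h)" if t: "t \<in> {c<..<e}" for t
    proof -
      have "t \<in> {0<..<fan_angle i} - cut_params i"
        using t ce by auto
      then have "t \<in> link_hits p M i \<longleftrightarrow> p + link_radius *\<^sub>R circle_point (\<theta> + \<sigma> * t) \<in> circle_grid p link_radius M"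
        using image[OF t] by (simp add: link_hits_def)
      also have "\<dots> \<longleftrightarrow> (\<exists>m::int. \<theta> + \<sigma> * t = m * h)"
        using link_radius_pos M by (simp add: mem_circle_grid_iff h_def)
      finally show ?thesis .
    qed
    with \<sigma> show ?thesis
      by blast
  qed
  have "(fan_angle i - 0) / h - real (card (cut_params i \<inter> {0<..<fan_angle i})) - 1
      \<le> real (card (link_hits p M i \<inter> {0<..<fan_angle i}))"
    using h finite_link_hits[OF i] finite_cut_params[OF i] lattice by (rule card_piecewise_reflected_lattice)
  moreover have "link_hits p M i \<inter> {0<..<fan_angle i} = link_hits p M i"
    "cut_params i \<inter> {0<..<fan_angle i} = cut_params i"
    by (auto simp: link_hits_def cut_params_def)
  ultimately show ?thesis
    by (simp add: h_def)
qed

theorem fan_angle_sum_le: "(\<Sum>i\<in>I. fan_angle i) \<le> 2 * pi"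
proof -
  obtain p where p: "\<And>x. x \<in> (\<Union>i\<in>I. face i) - C \<Longrightarrow> developed_vertex x = p"
    by (rule developed_vertex_const) auto
  define N where "N = (\<Sum>i\<in>I. real (card (cut_params i)) + 1)"
  have "(\<Sum>i\<in>I. fan_angle i) / (2 * pi) \<le> 1"
  proof (rule le_one_if_multiples_bounded)
    fix M :: nat assume M: "M > 0"
    have "(\<Sum>i\<in>I. fan_angle i * M / (2 * pi) - card (cut_params i) - 1)
        \<le> (\<Sum>i\<in>I. real (card (link_hits p M i)))"
      using card_link_hits_ge[OF p M] by (rule sum_mono)
    also have "\<dots> \<le> M"
      using sum_card_link_hits_le[of p M] by (simp flip: of_nat_sum)
    finally show "M * ((\<Sum>i\<in>I. fan_angle i) / (2 * pi)) \<le> M + N"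
      by (simp add: N_def sum_subtractf sum_divide_distrib sum_distrib_left sum.distrib algebra_simps)
  qed
  then show ?thesis
    by simp
qed

end

theorem angle_sum_le_if_general_unfolding:
  assumes fan: "triangle_fan I v a b"
    and has_unfolding: "has_general_unfolding ((\<lambda>i. tri v (a i) (b i)) ` I) B"
  shows "(\<Sum>i\<in>I. vangle (a i - v) (b i - v)) \<le> 2 * pi"
proof -
  obtain C f where "is_cutting (\<Union>i\<in>I. tri v (a i) (b i)) B C"
    and "flat_embedding ((\<lambda>i. tri v (a i) (b i)) ` I) C f"
    using has_unfolding unfolding has_general_unfolding_def by blast
  with fan interpret fan_unfolding I v a b B C f
    by (simp add: fan_unfolding_def fan_unfolding_axioms_def)
  show ?thesis
    using fan_angle_sum_le by (simp add: fan_angle_def)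
qed

lemma cyclic_triangle_fan:
  fixes k :: nat and v :: pt3 and a :: "nat \<Rightarrow> pt3"
  defines "T \<equiv> (\<lambda>i. tri v (a i) (a (Suc i mod k)))"
  assumes k: "k > 0"
    and nondeg: "\<forall>i<k. \<not> collinear {v, a i, a (Suc i mod k)}"
    and inter: "\<forall>i<k. \<forall>j<k. i \<noteq> j \<longrightarrow>
        T i \<inter> T j = (if j = Suc i mod k then closed_segment v (a j)
                      else if i = Suc j mod k then closed_segment v (a i)
                      else {v})"
  shows "triangle_fan {..<k} v a (\<lambda>i. a (Suc i mod k))"
proof
  show "finite {..<k}" "{..<k} \<noteq> {}"
    using k by auto
  show "\<not> collinear {v, a i, a (Suc i mod k)}" if "i \<in> {..<k}" for i
    using nondeg that by simp
  fix i j assume ij: "i \<in> {..<k}" "j \<in> {..<k}" "i \<noteq> j"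
  have meet: "T i \<inter> T j = (if j = Suc i mod k then closed_segment v (a j)
      else if i = Suc j mod k then closed_segment v (a i) else {v})"
    using inter ij by simp
  show "tri v (a i) (a (Suc i mod k)) \<inter> tri v (a j) (a (Suc j mod k)) = {v} \<or>
      (\<exists>w\<in>{a i, a (Suc i mod k)} \<inter> {a j, a (Suc j mod k)}.
        tri v (a i) (a (Suc i mod k)) \<inter> tri v (a j) (a (Suc j mod k)) = closed_segment v w)"
  proof (cases "j = Suc i mod k")
    case True
    with meet have "T i \<inter> T j = closed_segment v (a j)"
      by simp
    moreover have "a j \<in> {a i, a (Suc i mod k)} \<inter> {a j, a (Suc j mod k)}"
      using True by simp
    ultimately show ?thesis
      unfolding T_def by blast
  next
    case not_next: False
    show ?thesis
    proof (cases "i = Suc j mod k")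
      case True
      with meet not_next have "T i \<inter> T j = closed_segment v (a i)"
        by simp
      moreover have "a i \<in> {a i, a (Suc i mod k)} \<inter> {a j, a (Suc j mod k)}"
        using True by simp
      ultimately show ?thesis
        unfolding T_def by blast
    next
      case False
      with meet not_next have "T i \<inter> T j = {v}"
        by simp
      then show ?thesis
        unfolding T_def by blast
    qed
  qed
qed

theorem theorem11:
  fixes k :: nat and v :: pt3 and a :: "nat \<Rightarrow> pt3"
  defines "T \<equiv> (\<lambda>i. tri v (a i) (a (Suc i mod k)))"
  assumes k3: "k \<ge> 3"
    and a_inj: "inj_on a {..<k}"
    and nondeg: "\<forall>i<k. \<not> collinear {v, a i, a (Suc i mod k)}"
    and inter: "\<forall>i<k. \<forall>j<k. i \<noteq> j \<longrightarrow>
        T i \<inter> T j = (if j = Suc i mod k then closed_segment v (a j)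
                      else if i = Suc j mod k then closed_segment v (a i)
                      else {v})"
    and neg_curv: "(\<Sum>i<k. vangle (a i - v) (a (Suc i mod k) - v)) > 2 * pi"
  shows "\<not> has_general_unfolding (T ` {..<k})
           (\<Union>i<k. closed_segment (a i) (a (Suc i mod k)))"
proof
  assume has_unfolding: "has_general_unfolding (T ` {..<k}) (\<Union>i<k. closed_segment (a i) (a (Suc i mod k)))"
  have "triangle_fan {..<k} v a (\<lambda>i. a (Suc i mod k))"
    using k3 nondeg inter unfolding T_def by (intro cyclic_triangle_fan) auto
  then have "(\<Sum>i<k. vangle (a i - v) (a (Suc i mod k) - v)) \<le> 2 * pi"
    using has_unfolding unfolding T_def by (rule angle_sum_le_if_general_unfolding)
  with neg_curv show False
    by simp
qed

end
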